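(* Let $0<n<1$ and $f\in D_{HK}$. The Abel integral equation $$\frac{1}{\Gamma(n)}\int_a^x(x-t)^{n-1}\varphi(t)\,dt=f(x)\qquad (a\le x\le b),$$ i.e. $\mathcal{J}_a^n\varphi=f$, has a solution $\varphi\in D_{HK}$ if and only if $\mathcal{J}_a^{1-n}f\in C[a,b]$ and $\mathcal{J}_a^{1-n}f(a)=0$.
   Context: Fix real numbers $a<b$. Let $C_0=\{F\in C[a,b]:F(a)=0\}$. A distribution $f$ on $(a,b)$ is Henstock–Kurzweil integrable if $f=F'$ (distributional derivative) for some (unique) $F\in C_0$; its integral is $\int_c^d f=F(d)-F(c)$. $D_{HK}$ is the space of these with the Alexiewicz norm $\|f\|_A=\sup_{[a,b]}|F|$; $L^1[a,b]$ is dense in it. Riemann–Liouville fractional integral on $D_{HK}$: for $m\ge1$, $\mathcal{J}_a^mf(x)=\frac{1}{\Gamma(m)}\int_a^x(x-t)^{m-1}f(t)\,dt$; for $0<m<1$, $\mathcal{J}_a^mf(x)=\frac{1}{\Gamma(m)}\lim_{k}\int_a^x(x-t)^{m-1}f_k(t)\,dt$ with $(f_k)\subset L^1[a,b]$, $\|f_k-f\|_A\to0$. In the Abel equation the left-hand side is understood as $\mathcal{J}_a^n\varphi$. *)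

theory Defs
  imports "HOL-Analysis.Analysis"
begin

text \<open>An element f of D_HK on (a,b) is represented by its unique primitive
  F in C_0 = {F in C[a,b] : F(a) = 0}, i.e. f = F' in the distributional sense.\<close>

definition C0 :: "real \<Rightarrow> real \<Rightarrow> (real \<Rightarrow> real) set" where
  "C0 a b = {F. continuous_on {a..b} F \<and> F a = 0}"

text \<open>Sup norm on [a,b]; applied to a difference of primitives it is the Alexiewicz norm.\<close>
definition supnorm :: "real \<Rightarrow> real \<Rightarrow> (real \<Rightarrow> real) \<Rightarrow> real" where
  "supnorm a b F = (SUP x\<in>{a..b}. \<bar>F x\<bar>)"

definition prim :: "real \<Rightarrow> (real \<Rightarrow> real) \<Rightarrow> real \<Rightarrow> real" where
  "prim a g = (\<lambda>x. integral {a..x} g)"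

definition RL :: "real \<Rightarrow> real \<Rightarrow> (real \<Rightarrow> real) \<Rightarrow> real \<Rightarrow> real" where
  "RL a m g x = (1 / Gamma m) * integral {a..x} (\<lambda>t. (x - t) powr (m - 1) * g t)"

text \<open>Riemann--Liouville integral J_a^m on D_HK for 0 < m < 1, in the primitive
  representation: HKJ a b m F is the primitive G (in C_0, normalised to 0 outside [a,b])
  of J_a^m f, where f = F', defined as the Alexiewicz-norm limit of J_a^m f_k for every
  sequence f_k in L^1[a,b] converging to f in the Alexiewicz norm.\<close>
definition HKJ :: "real \<Rightarrow> real \<Rightarrow> real \<Rightarrow> (real \<Rightarrow> real) \<Rightarrow> real \<Rightarrow> real" where
  "HKJ a b m F = (THE G. G \<in> C0 a b \<and> (\<forall>x. x \<notin> {a..b} \<longrightarrow> G x = 0) \<and>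
     (\<forall>fk :: nat \<Rightarrow> real \<Rightarrow> real.
        (\<forall>k. fk k absolutely_integrable_on {a..b}) \<and>
        (\<lambda>k. supnorm a b (\<lambda>x. prim a (fk k) x - F x)) \<longlonglongrightarrow> 0 \<longrightarrow>
        (\<lambda>k. supnorm a b (\<lambda>x. prim a (RL a m (fk k)) x - G x)) \<longlonglongrightarrow> 0))"

end

theory Submission
  imports Defs
begin

(*
  Write J^m for the Riemann--Liouville integral. For integrable h the semigroup law
  J^\<alpha> (J^\<beta> h) = J^(\<alpha>+\<beta>) h follows by exchanging the order of integration and evaluating
  the inner integral as a Beta integral; we only need \<alpha> + \<beta> \<ge> 1, where the kernel
  (x - t) powr (\<alpha> + \<beta> - 1) is bounded and Fubini applies directly. As J^1 is the primitive,
  J^m commutes with taking primitives, which yields the estimate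
  |prim (J^m h) - J^m F| \<le> C * supnorm (prim h - F). Approximating F uniformly by primitives
  of polynomials, this shows that the primitive of J^m F' is J^m F, and that it is continuous.
  So J^n \<phi> = f means J^n \<Phi> = F for the primitive \<Phi> of \<phi>, and then J^(1-n) F = J^1 \<Phi> = prim \<Phi>.
  Conversely, if J^(1-n) F = prim g with g continuous and g a = 0, then
  prim (J^n g) = J^n (J^(1-n) F) = prim F, hence J^n g = F.
*)

lemma Beta_kernel_has_integral:
  fixes t x \<alpha> \<beta> :: real
  assumes "t < x" "0 < \<alpha>" "0 < \<beta>"
  shows "((\<lambda>y. (x - y) powr (\<alpha> - 1) * (y - t) powr (\<beta> - 1)) has_integral
          Beta \<alpha> \<beta> * (x - t) powr (\<alpha> + \<beta> - 1)) {t..x}"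
proof -
  define g where "g = (\<lambda>s::real. s powr (\<beta> - 1) * (1 - s) powr (\<alpha> - 1))"
  \<comment> \<open>Substitute s = (y - t) / (x - t) in the Beta integral of g over [0, 1].\<close>
  have affine: "((\<lambda>y. g ((1 / (x - t)) *\<^sub>R y + (- t / (x - t)))) has_integral
          (Beta \<beta> \<alpha> /\<^sub>R (1 / (x - t)) ^ DIM(real)))
        (cbox ((0 - (- t / (x - t))) /\<^sub>R (1 / (x - t))) ((1 - (- t / (x - t))) /\<^sub>R (1 / (x - t))))"
    using has_integral_Beta_real[OF assms(3,2)] assms(1)
    by (intro has_integral_affinity') (simp_all add: g_def)
  have "(1 / (x - t)) *\<^sub>R y + (- t / (x - t)) = (y - t) / (x - t)" for y
    by (simp add: diff_divide_distrib)
  moreover have "cbox ((0 - (- t / (x - t))) /\<^sub>R (1 / (x - t))) ((1 - (- t / (x - t))) /\<^sub>R (1 / (x - t)))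
      = {t..x}"
    using assms(1) by (simp add: field_simps)
  moreover have "Beta \<beta> \<alpha> /\<^sub>R (1 / (x - t)) ^ DIM(real) = Beta \<beta> \<alpha> * (x - t)"
    by simp
  ultimately have subst: "((\<lambda>y. g ((y - t) / (x - t))) has_integral Beta \<beta> \<alpha> * (x - t)) {t..x}"
    using affine by (simp only:)
  have "(x - t) powr (\<alpha> + \<beta> - 2) * g ((y - t) / (x - t)) =
        (x - y) powr (\<alpha> - 1) * (y - t) powr (\<beta> - 1)" if "y \<in> {t..x}" for y
  proof -
    have "1 - (y - t) / (x - t) = (x - y) / (x - t)" using assms by (simp add: field_simps)
    then have "g ((y - t) / (x - t)) = ((y - t) powr (\<beta> - 1) / (x - t) powr (\<beta> - 1)) *
                 ((x - y) powr (\<alpha> - 1) / (x - t) powr (\<alpha> - 1))"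
      using that assms by (simp add: g_def powr_divide)
    moreover have "(x - t) powr (\<alpha> + \<beta> - 2) = (x - t) powr (\<beta> - 1) * (x - t) powr (\<alpha> - 1)"
      using assms by (simp add: powr_add[symmetric] add.commute)
    ultimately show ?thesis using assms by (simp add: field_simps)
  qed
  moreover have "(x - t) powr (\<alpha> + \<beta> - 2) * (Beta \<beta> \<alpha> * (x - t)) = Beta \<alpha> \<beta> * (x - t) powr (\<alpha> + \<beta> - 1)"
    using assms(1) powr_add[of "x - t" "\<alpha> + \<beta> - 2" 1] by (simp add: Beta_commute)
  ultimately show ?thesis
    using has_integral_eq[OF _ has_integral_mult_right[OF subst, of "(x - t) powr (\<alpha> + \<beta> - 2)"]]
    by auto
qed

lemma powr_kernel_has_integral:
  fixes a x m :: real
  assumes "a < x" "0 < m"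
  shows "((\<lambda>t. (x - t) powr (m - 1)) has_integral (x - a) powr m / m) {a..x}"
proof -
  have "Beta m 1 = 1 / m"
  proof -
    have "Gamma (m + 1) = m * Gamma m" by (rule Gamma_plus1) (use assms in auto)
    then show ?thesis using Gamma_real_pos[OF assms(2)] by (simp add: Beta_def)
  qed
  then have "((\<lambda>t. (x - t) powr (m - 1) * (t - a) powr (1 - 1)) has_integral (x - a) powr m / m) {a..x}"
    using Beta_kernel_has_integral[of a x m 1] assms by simp
  then show ?thesis
    by (rule has_integral_spike[OF negligible_sing[of a], rotated]) auto
qed

lemma integrable_lborel_if_has_integral_nonneg:
  fixes f :: "real \<Rightarrow> real"
  assumes "(f has_integral I) S" "\<And>x. x \<in> S \<Longrightarrow> 0 \<le> f x"
    and "(\<lambda>y. indicator S y * f y) \<in> borel_measurable borel"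
  shows "integrable lborel (\<lambda>y. indicator S y * f y)"
    "integral\<^sup>L lborel (\<lambda>y. indicator S y * f y) = I"
proof -
  have f: "f absolutely_integrable_on S"
    using assms by (intro nonnegative_absolutely_integrable_1) auto
  have mb: "(\<lambda>y. indicator S y * f y) \<in> borel_measurable lborel" using assms(3) by simp
  from f have "integrable lebesgue (\<lambda>y. indicator S y * f y)"
    by (simp add: set_integrable_def)
  then show "integrable lborel (\<lambda>y. indicator S y * f y)"
    using integrable_completion[OF mb] by simp
  have "(LINT x:S | lebesgue. f x) = integral S f"
    using set_lebesgue_integral_eq_integral(2)[OF f] .
  then have "integral\<^sup>L lebesgue (\<lambda>y. indicator S y * f y) = I"
    using assms(1) by (simp add: set_lebesgue_integral_def integral_unique)
  then show "integral\<^sup>L lborel (\<lambda>y. indicator S y * f y) = I"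
    using integral_completion[OF mb] by simp
qed

definition RL_composition_kernel ::
    "real \<Rightarrow> real \<Rightarrow> real \<Rightarrow> real \<Rightarrow> (real \<Rightarrow> real) \<Rightarrow> real \<Rightarrow> real \<Rightarrow> real" where
  "RL_composition_kernel a x \<alpha> \<beta> h t y =
     (if a \<le> t \<and> t \<le> y \<and> y \<le> x then (x - y) powr (\<alpha> - 1) * (y - t) powr (\<beta> - 1) * h t else 0)"

lemma RL_composition_kernel_measurable [measurable]:
  assumes [measurable]: "h \<in> borel_measurable borel"
  shows "case_prod (RL_composition_kernel a x \<alpha> \<beta> h) \<in> borel_measurable (lborel \<Otimes>\<^sub>M lborel)"
  unfolding RL_composition_kernel_def by measurable

lemma RL_composition_kernel_integral_snd:
  fixes a x t :: real and h :: "real \<Rightarrow> real"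
  assumes "0 < \<alpha>" "0 < \<beta>"
  defines "R \<equiv> indicator {a..x} t * ((x - t) powr (\<alpha> + \<beta> - 1) * h t)"
  shows "integrable lborel (RL_composition_kernel a x \<alpha> \<beta> h t)" (is ?integrable)
    and "(\<integral>y. RL_composition_kernel a x \<alpha> \<beta> h t y \<partial>lborel) = Beta \<alpha> \<beta> * R" (is ?integral)
    and "(\<integral>y. \<bar>RL_composition_kernel a x \<alpha> \<beta> h t y\<bar> \<partial>lborel) = Beta \<alpha> \<beta> * \<bar>R\<bar>" (is ?abs)
proof -
  have "?integrable \<and> ?integral \<and> ?abs"
  proof (cases "a \<le> t \<and> t < x")
    case True
    define K where "K = (\<lambda>y. indicator {t..x} y * ((x - y) powr (\<alpha> - 1) * (y - t) powr (\<beta> - 1)))"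
    have "integrable lborel K" "integral\<^sup>L lborel K = Beta \<alpha> \<beta> * (x - t) powr (\<alpha> + \<beta> - 1)"
      using integrable_lborel_if_has_integral_nonneg[OF Beta_kernel_has_integral[of t x \<alpha> \<beta>]]
        True assms by (auto simp: K_def measurable_lborel1)
    moreover have "RL_composition_kernel a x \<alpha> \<beta> h t = (\<lambda>y. K y * h t)"
      using True by (auto simp: RL_composition_kernel_def K_def indicator_def fun_eq_iff)
    moreover have "(\<lambda>y. \<bar>K y * h t\<bar>) = (\<lambda>y. K y * \<bar>h t\<bar>)"
      by (auto simp: K_def indicator_def fun_eq_iff abs_mult)
    ultimately show ?thesis
      using True by (simp add: R_def abs_mult)
  next
    case False
    \<comment> \<open>For t = x both sides vanish only because 0 powr p = 0 for every p.\<close>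
    then have "RL_composition_kernel a x \<alpha> \<beta> h t = (\<lambda>y. 0)" and "R = 0"
      by (auto simp: RL_composition_kernel_def R_def fun_eq_iff indicator_def)
    then show ?thesis by simp
  qed
  then show ?integrable ?integral ?abs by blast+
qed

lemma integrable_indicator_powr_mult:
  fixes h :: "real \<Rightarrow> real"
  assumes [measurable]: "h \<in> borel_measurable borel"
    and "integrable lborel (\<lambda>t. indicator {a..x} t * h t)" and "0 \<le> \<gamma>"
  shows "integrable lborel (\<lambda>t. indicator {a..x} t * ((x - t) powr \<gamma> * h t))"
proof (rule Bochner_Integration.integrable_bound[OF _ _ AE_I2])
  show "integrable lborel (\<lambda>t. (x - a) powr \<gamma> * norm (indicator {a..x} t * h t))"
    using assms(2) by auto
  fix t
  show "norm (indicator {a..x} t * ((x - t) powr \<gamma> * h t)) \<le>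
      norm ((x - a) powr \<gamma> * norm (indicator {a..x} t * h t))"
  proof (cases "t \<in> {a..x}")
    case True
    then have "(x - t) powr \<gamma> \<le> (x - a) powr \<gamma>"
      using assms(3) by (intro powr_mono2) auto
    then show ?thesis using True by (auto simp: abs_mult intro!: mult_right_mono)
  qed auto
qed measurable

lemma integrable_RL_composition_kernel:
  fixes h :: "real \<Rightarrow> real"
  assumes [measurable]: "h \<in> borel_measurable borel"
    and "integrable lborel (\<lambda>t. indicator {a..x} t * h t)"
    and "0 < \<alpha>" "0 < \<beta>" "1 \<le> \<alpha> + \<beta>"
  shows "integrable (lborel \<Otimes>\<^sub>M lborel) (case_prod (RL_composition_kernel a x \<alpha> \<beta> h))"
proof (rule lborel_pair.Fubini_integrable)
  have "integrable lborel (\<lambda>t. indicator {a..x} t * ((x - t) powr (\<alpha> + \<beta> - 1) * h t))"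
    using assms by (intro integrable_indicator_powr_mult) auto
  then have "integrable lborel (\<lambda>t. Beta \<alpha> \<beta> *
      \<bar>indicator {a..x} t * ((x - t) powr (\<alpha> + \<beta> - 1) * h t)\<bar>)"
    by (intro integrable_mult_right integrable_abs)
  then show "integrable lborel
      (\<lambda>t. \<integral>y. norm (case_prod (RL_composition_kernel a x \<alpha> \<beta> h) (t, y)) \<partial>lborel)"
    using RL_composition_kernel_integral_snd(3)[OF assms(3,4)] by simp
qed (use RL_composition_kernel_integral_snd(1)[OF assms(3,4)] in simp_all)

lemma RL_composition_kernel_integral_fst:
  fixes h :: "real \<Rightarrow> real"
  assumes "integrable lborel (\<lambda>t. RL_composition_kernel a x \<alpha> \<beta> h t y)"
  shows "(\<integral>t. RL_composition_kernel a x \<alpha> \<beta> h t y \<partial>lborel) =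
    indicator {a..x} y * ((x - y) powr (\<alpha> - 1) * integral {a..y} (\<lambda>t. (y - t) powr (\<beta> - 1) * h t))"
proof (cases "a \<le> y \<and> y < x")
  case True
  define p where "p = (x - y) powr (\<alpha> - 1)"
  have "p > 0" using True by (simp add: p_def)
  have kernel: "(\<lambda>t. RL_composition_kernel a x \<alpha> \<beta> h t y) =
      (\<lambda>t. p * (indicator {a..y} t * ((y - t) powr (\<beta> - 1) * h t)))"
    using True by (auto simp: RL_composition_kernel_def p_def indicator_def fun_eq_iff)
  have "set_integrable lborel {a..y} (\<lambda>t. (y - t) powr (\<beta> - 1) * h t)"
    using assms \<open>p > 0\<close> unfolding kernel set_integrable_def by simp
  from set_borel_integral_eq_integral(2)[OF this] show ?thesis
    using True by (simp add: kernel p_def set_lebesgue_integral_def)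
next
  case False
  then have "(\<lambda>t. RL_composition_kernel a x \<alpha> \<beta> h t y) = (\<lambda>t. 0)"
    by (auto simp: RL_composition_kernel_def fun_eq_iff)
  then show ?thesis using False by (auto simp: indicator_def)
qed

lemma RL_composition_has_integral_borel:
  fixes h :: "real \<Rightarrow> real"
  assumes [measurable]: "h \<in> borel_measurable borel"
    and "integrable lborel (\<lambda>t. indicator {a..x} t * h t)"
    and \<alpha>: "0 < \<alpha>" and \<beta>: "0 < \<beta>" and "1 \<le> \<alpha> + \<beta>"
  shows "((\<lambda>y. (x - y) powr (\<alpha> - 1) * integral {a..y} (\<lambda>t. (y - t) powr (\<beta> - 1) * h t)) has_integral
          Beta \<alpha> \<beta> * integral {a..x} (\<lambda>t. (x - t) powr (\<alpha> + \<beta> - 1) * h t)) {a..x}"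
proof -
  let ?K = "RL_composition_kernel a x \<alpha> \<beta> h"
  let ?G = "\<lambda>y. indicator {a..x} y *
      ((x - y) powr (\<alpha> - 1) * integral {a..y} (\<lambda>t. (y - t) powr (\<beta> - 1) * h t))"
  have K: "integrable (lborel \<Otimes>\<^sub>M lborel) (case_prod ?K)"
    using integrable_RL_composition_kernel assms by blast
  have R: "set_integrable lborel {a..x} (\<lambda>t. (x - t) powr (\<alpha> + \<beta> - 1) * h t)"
    using integrable_indicator_powr_mult[OF assms(1,2)] assms(5) by (simp add: set_integrable_def)
  have "(\<integral>y. (\<integral>t. ?K t y \<partial>lborel) \<partial>lborel) = (\<integral>t. (\<integral>y. ?K t y \<partial>lborel) \<partial>lborel)"
    using lborel_pair.Fubini_integral[OF K] by simp
  also have "\<dots> = Beta \<alpha> \<beta> * integral {a..x} (\<lambda>t. (x - t) powr (\<alpha> + \<beta> - 1) * h t)"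
    using set_borel_integral_eq_integral(2)[OF R]
    by (simp add: RL_composition_kernel_integral_snd(2)[OF \<alpha> \<beta>] set_lebesgue_integral_def)
  finally have F_integral: "(\<integral>y. (\<integral>t. ?K t y \<partial>lborel) \<partial>lborel) =
      Beta \<alpha> \<beta> * integral {a..x} (\<lambda>t. (x - t) powr (\<alpha> + \<beta> - 1) * h t)" .
  have "integrable lborel (\<lambda>y. \<integral>t. ?K t y \<partial>lborel)"
    using lborel_pair.integrable_fst'[OF lborel_pair.integrable_product_swap[OF K]]
    by (simp add: case_prod_beta)
  from has_integral_integral_lborel[OF this]
  have F: "((\<lambda>y. \<integral>t. ?K t y \<partial>lborel) has_integral
      Beta \<alpha> \<beta> * integral {a..x} (\<lambda>t. (x - t) powr (\<alpha> + \<beta> - 1) * h t)) UNIV"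
    unfolding F_integral .
  have "AE y in lborel. y \<in> UNIV \<longrightarrow> (\<integral>t. ?K t y \<partial>lborel) = ?G y"
    using lborel_pair.AE_integrable_snd[OF K]
    by (auto elim!: eventually_mono simp: RL_composition_kernel_integral_fst)
  from F[unfolded has_integral_AE[OF this]] have G: "(?G has_integral
      Beta \<alpha> \<beta> * integral {a..x} (\<lambda>t. (x - t) powr (\<alpha> + \<beta> - 1) * h t)) UNIV" .
  have "?G = (\<lambda>y. if y \<in> {a..x} then (x - y) powr (\<alpha> - 1) *
      integral {a..y} (\<lambda>t. (y - t) powr (\<beta> - 1) * h t) else 0)"
    by (auto simp: fun_eq_iff)
  from G[unfolded this] show ?thesis
    by (simp only: has_integral_restrict_UNIV)
qed

lemma RL_composition_has_integral:
  fixes h :: "real \<Rightarrow> real"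
  assumes h: "h absolutely_integrable_on {a..x}"
    and "0 < \<alpha>" "0 < \<beta>" "1 \<le> \<alpha> + \<beta>"
  shows "((\<lambda>y. (x - y) powr (\<alpha> - 1) * integral {a..y} (\<lambda>t. (y - t) powr (\<beta> - 1) * h t)) has_integral
          Beta \<alpha> \<beta> * integral {a..x} (\<lambda>t. (x - t) powr (\<alpha> + \<beta> - 1) * h t)) {a..x}"
proof -
  \<comment> \<open>Fubini is available on lborel only, so we pass to a Borel representative h' of h.\<close>
  have h_lebesgue: "integrable lebesgue (\<lambda>t. indicator {a..x} t * h t)"
    using h by (simp add: set_integrable_def)
  then have "(\<lambda>t. indicator {a..x} t * h t) \<in> borel_measurable (completion lborel)"
    by auto
  from completion_ex_borel_measurable_real[OF this]
  obtain h' where h'[measurable]: "h' \<in> borel_measurable borel"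
    and ae: "AE t in lborel. indicator {a..x} t * h t = h' t"
    by auto
  have "h' \<in> borel_measurable lborel" by simp
  from measurable_completion[OF this] have "h' \<in> borel_measurable lebesgue" by simp
  from integrable_cong_AE_imp[OF h_lebesgue this AE_completion[OF ae]]
  have "integrable lebesgue h'" .
  then have "integrable lborel h'"
    using integrable_completion[of h'] by simp
  then have "integrable lborel (\<lambda>t. indicator {a..x} t * h' t)"
    using integrable_real_mult_indicator[of "{a..x}" lborel h'] by (simp add: mult.commute)
  note borel_version = RL_composition_has_integral_borel[OF h' this assms(2-4)]
  have same_integral: "integral {a..y} (\<lambda>t. (y - t) powr c * h t) =
      integral {a..y} (\<lambda>t. (y - t) powr c * h' t)" if "y \<le> x" for y c
  proof -
    have "AE t in lborel. t \<in> {a..y} \<longrightarrow> (y - t) powr c * h t = (y - t) powr c * h' t"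
      using ae by eventually_elim (use that in \<open>auto simp: indicator_def\<close>)
    then have "((\<lambda>t. (y - t) powr c * h t) has_integral I) {a..y} \<longleftrightarrow>
        ((\<lambda>t. (y - t) powr c * h' t) has_integral I) {a..y}" for I
      by (rule has_integral_AE)
    then show ?thesis
      unfolding integral_def integrable_on_def by simp
  qed
  show ?thesis
    unfolding same_integral[OF order_refl]
    by (rule has_integral_eq[OF _ borel_version]) (simp add: same_integral)
qed

lemma RL_one:
  assumes "a \<le> x"
  shows "RL a 1 g x = integral {a..x} g"
proof -
  have "integral {a..x} (\<lambda>t. (x - t) powr (1 - 1) * g t) = integral {a..x} g"
    by (rule integral_spike[of "{x}"]) auto
  then show ?thesis by (simp add: RL_def)
qed

lemma RL_cong:
  assumes "\<And>t. t \<in> {a..x} \<Longrightarrow> g t = g' t"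
  shows "RL a m g x = RL a m g' x"
proof -
  have "integral {a..x} (\<lambda>t. (x - t) powr (m - 1) * g t) = integral {a..x} (\<lambda>t. (x - t) powr (m - 1) * g' t)"
    by (rule integral_cong) (simp add: assms)
  then show ?thesis by (simp add: RL_def)
qed

lemma RL_semigroup:
  fixes h :: "real \<Rightarrow> real"
  assumes h: "h absolutely_integrable_on {a..x}"
    and \<alpha>: "0 < \<alpha>" and \<beta>: "0 < \<beta>" and "1 \<le> \<alpha> + \<beta>"
  shows "RL a \<alpha> (RL a \<beta> h) x = RL a (\<alpha> + \<beta>) h x"
proof -
  have "integral {a..x} (\<lambda>y. (x - y) powr (\<alpha> - 1) * RL a \<beta> h y) =
      (1 / Gamma \<beta>) * (Beta \<alpha> \<beta> * integral {a..x} (\<lambda>t. (x - t) powr (\<alpha> + \<beta> - 1) * h t))"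
    using has_integral_mult_right[OF RL_composition_has_integral[OF assms], of "1 / Gamma \<beta>"]
    by (intro integral_unique) (simp add: RL_def mult.left_commute)
  moreover have "Gamma \<alpha> > 0" "Gamma \<beta> > 0" "Gamma (\<alpha> + \<beta>) > 0" using \<alpha> \<beta> by auto
  ultimately show ?thesis by (simp add: RL_def Beta_def field_simps)
qed

lemma prim_RL_commute:
  fixes h :: "real \<Rightarrow> real"
  assumes h: "h absolutely_integrable_on {a..x}" and "a \<le> x" and "0 < m"
  shows "prim a (RL a m h) x = RL a m (prim a h) x"
proof -
  have "prim a (RL a m h) x = RL a 1 (RL a m h) x" by (simp add: prim_def RL_one[OF \<open>a \<le> x\<close>])
  also have "\<dots> = RL a (m + 1) h x"
    using RL_semigroup[OF h, of 1 m] \<open>0 < m\<close> by (simp add: add.commute)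
  also have "\<dots> = RL a m (RL a 1 h) x"
    using RL_semigroup[OF h, of m 1] \<open>0 < m\<close> by simp
  also have "\<dots> = RL a m (prim a h) x"
    by (rule RL_cong) (simp add: RL_one prim_def)
  finally show ?thesis .
qed

lemma RL_integrable_on:
  fixes h :: "real \<Rightarrow> real"
  assumes h: "h absolutely_integrable_on {a..x}" and "0 < m"
  shows "RL a m h integrable_on {a..x}"
proof -
  have "(\<lambda>y. (x - y) powr (1 - 1) * integral {a..y} (\<lambda>t. (y - t) powr (m - 1) * h t)) integrable_on {a..x}"
    using RL_composition_has_integral[OF h, of 1 m] \<open>0 < m\<close> by auto
  then have "(\<lambda>y. integral {a..y} (\<lambda>t. (y - t) powr (m - 1) * h t)) integrable_on {a..x}"
    by (rule integrable_spike[OF _ negligible_sing[of x]]) auto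
  then show ?thesis unfolding RL_def[abs_def] by (rule integrable_on_mult_right)
qed

lemma absolutely_integrable_powr_kernel_mult:
  fixes a x m :: real and D :: "real \<Rightarrow> real"
  assumes D: "continuous_on {a..x} D" and "0 < m"
  shows "(\<lambda>t. (x - t) powr (m - 1) * D t) absolutely_integrable_on {a..x}"
proof (cases "a < x")
  case True
  have kernel: "(\<lambda>t. (x - t) powr (m - 1)) absolutely_integrable_on {a..x}"
    using powr_kernel_has_integral[OF True \<open>0 < m\<close>]
    by (intro nonnegative_absolutely_integrable_1) auto
  have "(\<lambda>t. D t * (x - t) powr (m - 1)) absolutely_integrable_on {a..x}"
  proof (rule absolutely_integrable_bounded_measurable_product_real[OF _ _ _ kernel])
    show "D \<in> borel_measurable (lebesgue_on {a..x})"
      by (rule continuous_imp_measurable_on_sets_lebesgue[OF D]) auto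
    show "bounded (D ` {a..x})"
      by (rule compact_imp_bounded[OF compact_continuous_image[OF D]]) auto
  qed auto
  then show ?thesis by (simp add: mult.commute)
next
  case False
  then have "negligible {a..x}"
    by (intro negligible_subset[OF negligible_sing[of a]]) auto
  then show ?thesis by (simp add: absolutely_integrable_on_def integrable_negligible)
qed

lemma abs_RL_le:
  fixes D :: "real \<Rightarrow> real"
  assumes D: "continuous_on {a..x} D" and M: "\<And>t. t \<in> {a..x} \<Longrightarrow> \<bar>D t\<bar> \<le> M"
    and m: "0 < m" and "a \<le> x"
  shows "\<bar>RL a m D x\<bar> \<le> M * (x - a) powr m / (m * Gamma m)"
proof (cases "a = x")
  case False
  then have kernel: "((\<lambda>t. M * (x - t) powr (m - 1)) has_integral M * ((x - a) powr m / m)) {a..x}"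
    using \<open>a \<le> x\<close> by (intro has_integral_mult_right powr_kernel_has_integral m) simp
  have "norm (integral {a..x} (\<lambda>t. (x - t) powr (m - 1) * D t)) \<le>
      integral {a..x} (\<lambda>t. M * (x - t) powr (m - 1))"
  proof (rule integral_norm_bound_integral)
    show "(\<lambda>t. (x - t) powr (m - 1) * D t) integrable_on {a..x}"
      using absolutely_integrable_powr_kernel_mult[OF D m] by (simp add: absolutely_integrable_on_def)
    show "(\<lambda>t. M * (x - t) powr (m - 1)) integrable_on {a..x}" using kernel by blast
    fix t assume "t \<in> {a..x}"
    then show "norm ((x - t) powr (m - 1) * D t) \<le> M * (x - t) powr (m - 1)"
      using mult_right_mono[OF M, of t "(x - t) powr (m - 1)"] by (simp add: abs_mult mult.commute)
  qed
  also have "\<dots> = M * (x - a) powr m / m" using integral_unique[OF kernel] by simp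
  finally show ?thesis
    using Gamma_real_pos[OF m] by (simp add: RL_def abs_mult divide_right_mono field_simps)
qed (simp add: RL_def)

lemma RL_diff:
  assumes "continuous_on {a..x} u" "continuous_on {a..x} v" "0 < m"
  shows "RL a m (\<lambda>t. u t - v t) x = RL a m u x - RL a m v x"
proof -
  have "(\<lambda>t. (x - t) powr (m - 1) * u t) integrable_on {a..x}"
    "(\<lambda>t. (x - t) powr (m - 1) * v t) integrable_on {a..x}"
    using absolutely_integrable_powr_kernel_mult assms absolutely_integrable_on_def by blast+
  from integral_diff[OF this] show ?thesis
    by (simp add: RL_def right_diff_distrib)
qed

lemma abs_le_supnorm:
  assumes "\<And>x. x \<in> {a..b} \<Longrightarrow> \<bar>D x\<bar> \<le> M" and "x \<in> {a..b}"
  shows "\<bar>D x\<bar> \<le> supnorm a b D"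
  unfolding supnorm_def
  by (rule cSUP_upper[OF assms(2)]) (use assms(1) in \<open>auto intro!: bdd_aboveI2[where M=M]\<close>)

lemma abs_le_supnorm_continuous:
  assumes "continuous_on {a..b} D" and "x \<in> {a..b}"
  shows "\<bar>D x\<bar> \<le> supnorm a b D"
proof -
  have "bounded (D ` {a..b})"
    by (rule compact_imp_bounded[OF compact_continuous_image[OF assms(1)]]) auto
  then obtain M where "\<And>x. x \<in> {a..b} \<Longrightarrow> \<bar>D x\<bar> \<le> M"
    unfolding bounded_iff by fastforce
  then show ?thesis using abs_le_supnorm assms(2) by blast
qed

lemma supnorm_le:
  assumes "a \<le> b" and "\<And>x. x \<in> {a..b} \<Longrightarrow> \<bar>D x\<bar> \<le> M"
  shows "supnorm a b D \<le> M"
  unfolding supnorm_def using assms by (intro cSUP_least) auto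

lemma supnorm_cong:
  assumes "\<And>x. x \<in> {a..b} \<Longrightarrow> D x = D' x"
  shows "supnorm a b D = supnorm a b D'"
  unfolding supnorm_def using assms by simp

lemma continuous_on_prim:
  fixes g :: "real \<Rightarrow> real"
  assumes "g integrable_on {a..b}"
  shows "continuous_on {a..b} (prim a g)"
  using indefinite_integral_continuous_1[OF assms] by (simp add: prim_def[abs_def])

lemma prim_approximation:
  assumes "continuous_on {a..b} F" and "F a = 0" and "0 < e"
  obtains f where "continuous_on {a..b} f" "\<And>x. x \<in> {a..b} \<Longrightarrow> \<bar>prim a f x - F x\<bar> < e"
proof -
  obtain g where g: "polynomial_function g" "\<And>x. x \<in> {a..b} \<Longrightarrow> \<bar>F x - g x\<bar> < e / 2"
    using Stone_Weierstrass_polynomial_function[OF compact_Icc assms(1), of "e / 2"] \<open>0 < e\<close> by auto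
  obtain g' where g': "polynomial_function g'" "\<And>x. (g has_vector_derivative (g' x)) (at x)"
    using has_vector_derivative_polynomial_function[OF g(1)] by blast
  have "\<bar>prim a g' x - F x\<bar> < e" if x: "x \<in> {a..b}" for x
  proof -
    have "(g' has_integral (g x - g a)) {a..x}"
      using x g'(2) by (intro fundamental_theorem_of_calculus) (auto intro: has_vector_derivative_at_within)
    then have "prim a g' x = g x - g a" by (simp add: prim_def integral_unique)
    moreover have "\<bar>F x - g x\<bar> < e / 2" "\<bar>F a - g a\<bar> < e / 2"
      using g(2) x by auto
    ultimately show ?thesis using \<open>F a = 0\<close> by arith
  qed
  then show ?thesis
    using that continuous_on_polymonial_function[OF g'(1)] by blast
qed

lemma prim_approximation_sequence:
  assumes "a \<le> b" and "continuous_on {a..b} F" and "F a = 0"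
  obtains fk where "\<And>k. continuous_on {a..b} (fk k)"
    "(\<lambda>k. supnorm a b (\<lambda>x. prim a (fk k) x - F x)) \<longlonglongrightarrow> 0"
proof -
  have "\<exists>f. continuous_on {a..b} f \<and> (\<forall>x\<in>{a..b}. \<bar>prim a f x - F x\<bar> < 1 / Suc k)" for k
    by (rule prim_approximation[OF assms(2,3), of "1 / Suc k"]) auto
  then obtain fk where "\<forall>k. continuous_on {a..b} (fk k) \<and>
      (\<forall>x\<in>{a..b}. \<bar>prim a (fk k) x - F x\<bar> < 1 / Suc k)"
    using choice[of "\<lambda>k f. continuous_on {a..b} f \<and> (\<forall>x\<in>{a..b}. \<bar>prim a f x - F x\<bar> < 1 / Suc k)"]
    by blast
  then have fk: "\<And>k. continuous_on {a..b} (fk k)"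
    and close: "\<And>k x. x \<in> {a..b} \<Longrightarrow> \<bar>prim a (fk k) x - F x\<bar> < 1 / Suc k"
    by blast+
  have "(\<lambda>k. supnorm a b (\<lambda>x. prim a (fk k) x - F x)) \<longlonglongrightarrow> 0"
  proof (rule Lim_null_comparison[OF always_eventually LIMSEQ_Suc[OF lim_1_over_n]], intro allI)
    fix k
    have close_le: "\<bar>prim a (fk k) x - F x\<bar> \<le> 1 / Suc k" if "x \<in> {a..b}" for x
      using less_imp_le[OF close[OF that]] by simp
    have "\<bar>prim a (fk k) a - F a\<bar> \<le> supnorm a b (\<lambda>x. prim a (fk k) x - F x)"
      using \<open>a \<le> b\<close> by (intro abs_le_supnorm[OF close_le]) auto
    moreover have "supnorm a b (\<lambda>x. prim a (fk k) x - F x) \<le> 1 / Suc k"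
      by (rule supnorm_le[OF \<open>a \<le> b\<close> close_le])
    ultimately show "norm (supnorm a b (\<lambda>x. prim a (fk k) x - F x)) \<le> 1 / real (Suc k)"
      by simp
  qed
  then show ?thesis using that fk by blast
qed

lemma abs_prim_RL_minus_RL_le:
  fixes h F :: "real \<Rightarrow> real"
  assumes "0 < m" and F: "continuous_on {a..b} F"
    and h: "h absolutely_integrable_on {a..b}" and x: "x \<in> {a..b}"
  shows "\<bar>prim a (RL a m h) x - RL a m F x\<bar> \<le>
      (b - a) powr m / (m * Gamma m) * supnorm a b (\<lambda>x. prim a h x - F x)"
proof -
  define s where "s = supnorm a b (\<lambda>x. prim a h x - F x)"
  have sub: "{a..x} \<subseteq> {a..b}" and "a \<le> x" using x by auto
  have prim_h: "continuous_on {a..b} (prim a h)"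
    using h by (simp add: continuous_on_prim absolutely_integrable_on_def)
  have D: "continuous_on {a..b} (\<lambda>x. prim a h x - F x)"
    by (intro continuous_intros prim_h F)
  have D_le: "\<bar>prim a h t - F t\<bar> \<le> s" if "t \<in> {a..b}" for t
    unfolding s_def by (rule abs_le_supnorm_continuous[OF D that])
  have "0 \<le> s" using D_le[of a] x by fastforce
  have "prim a (RL a m h) x - RL a m F x = RL a m (\<lambda>t. prim a h t - F t) x"
    using prim_RL_commute[OF absolutely_integrable_on_subinterval[OF h sub] \<open>a \<le> x\<close> \<open>0 < m\<close>]
      RL_diff[OF continuous_on_subset[OF prim_h sub] continuous_on_subset[OF F sub] \<open>0 < m\<close>]
    by simp
  also have "\<bar>\<dots>\<bar> \<le> s * (x - a) powr m / (m * Gamma m)"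
    using D_le sub by (intro abs_RL_le continuous_on_subset[OF D sub] \<open>0 < m\<close> \<open>a \<le> x\<close>) auto
  also have "\<dots> \<le> s * (b - a) powr m / (m * Gamma m)"
    using x \<open>0 < m\<close> \<open>0 \<le> s\<close>
    by (intro divide_right_mono mult_left_mono powr_mono2) auto
  finally show ?thesis by (simp add: s_def algebra_simps)
qed

lemma tendsto_supnorm_prim_RL:
  fixes F :: "real \<Rightarrow> real"
  assumes "a \<le> b" "0 < m" "continuous_on {a..b} F"
    and "\<And>k. fk k absolutely_integrable_on {a..b}"
    and "(\<lambda>k. supnorm a b (\<lambda>x. prim a (fk k) x - F x)) \<longlonglongrightarrow> 0"
  shows "(\<lambda>k. supnorm a b (\<lambda>x. prim a (RL a m (fk k)) x - RL a m F x)) \<longlonglongrightarrow> 0"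
proof (rule Lim_null_comparison[OF always_eventually tendsto_mult_right_zero[OF assms(5)]], intro allI)
  fix k
  let ?C = "(b - a) powr m / (m * Gamma m)"
  have bound: "\<bar>prim a (RL a m (fk k)) x - RL a m F x\<bar> \<le> ?C * supnorm a b (\<lambda>x. prim a (fk k) x - F x)"
    if "x \<in> {a..b}" for x
    using abs_prim_RL_minus_RL_le[OF assms(2,3,4) that] .
  have "0 \<le> supnorm a b (\<lambda>x. prim a (RL a m (fk k)) x - RL a m F x)"
    using abs_le_supnorm[OF bound, of a] \<open>a \<le> b\<close> by fastforce
  then show "norm (supnorm a b (\<lambda>x. prim a (RL a m (fk k)) x - RL a m F x))
      \<le> ?C * supnorm a b (\<lambda>x. prim a (fk k) x - F x)"
    using supnorm_le[OF \<open>a \<le> b\<close> bound] by simp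
qed

lemma continuous_on_RL:
  fixes F :: "real \<Rightarrow> real"
  assumes "a \<le> b" "0 < m" and F: "continuous_on {a..b} F" "F a = 0"
  shows "continuous_on {a..b} (RL a m F)"
proof -
  obtain fk where fk: "\<And>k. continuous_on {a..b} (fk k)"
    and lim: "(\<lambda>k. supnorm a b (\<lambda>x. prim a (fk k) x - F x)) \<longlonglongrightarrow> 0"
    using prim_approximation_sequence[OF assms(1) F] by blast
  have fk_int: "fk k absolutely_integrable_on {a..b}" for k
    by (rule absolutely_integrable_continuous_real[OF fk])
  let ?u = "\<lambda>k. prim a (RL a m (fk k))"
  have "uniform_limit {a..b} ?u (RL a m F) sequentially"
  proof (rule uniform_limitI)
    fix e :: real assume "0 < e"
    with tendsto_supnorm_prim_RL[OF assms(1,2) F(1) fk_int lim]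
    have "\<forall>\<^sub>F k in sequentially. supnorm a b (\<lambda>x. ?u k x - RL a m F x) < e"
      by (rule order_tendstoD(2))
    then show "\<forall>\<^sub>F k in sequentially. \<forall>x\<in>{a..b}. dist (?u k x) (RL a m F x) < e"
    proof (rule eventually_mono, intro ballI)
      fix k x assume "supnorm a b (\<lambda>x. ?u k x - RL a m F x) < e" "x \<in> {a..b}"
      then show "dist (?u k x) (RL a m F x) < e"
        using abs_le_supnorm[OF abs_prim_RL_minus_RL_le[OF assms(2) F(1) fk_int]]
        by (simp add: dist_real_def) (meson le_less_trans)
    qed
  qed
  moreover have "continuous_on {a..b} (?u k)" for k
    by (rule continuous_on_prim[OF RL_integrable_on[OF fk_int \<open>0 < m\<close>]])
  ultimately show ?thesis
    by (intro uniform_limit_theorem[of _ ?u]) auto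
qed

lemma supnorm_limit_unique:
  fixes u :: "nat \<Rightarrow> real \<Rightarrow> real"
  assumes "\<And>k. continuous_on {a..b} (u k)" "continuous_on {a..b} v" "continuous_on {a..b} w"
    and "(\<lambda>k. supnorm a b (\<lambda>x. u k x - v x)) \<longlonglongrightarrow> 0"
    and "(\<lambda>k. supnorm a b (\<lambda>x. u k x - w x)) \<longlonglongrightarrow> 0"
    and x: "x \<in> {a..b}"
  shows "v x = w x"
proof -
  have "\<bar>v x - w x\<bar> \<le> supnorm a b (\<lambda>x. u k x - v x) + supnorm a b (\<lambda>x. u k x - w x)" for k
    using abs_le_supnorm_continuous[OF _ x, of "\<lambda>x. u k x - v x"]
      abs_le_supnorm_continuous[OF _ x, of "\<lambda>x. u k x - w x"]
    by (simp add: continuous_on_diff assms(1-3))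
  then have "\<bar>v x - w x\<bar> \<le> 0"
    using LIMSEQ_le_const[OF tendsto_add_zero[OF assms(4,5)]] by blast
  then show ?thesis by simp
qed

lemma eq_RL_if_prim_RL_tendsto:
  fixes F G :: "real \<Rightarrow> real"
  assumes "a \<le> b" "0 < m" "F \<in> C0 a b" and G: "continuous_on {a..b} G"
    and G_tendsto: "\<And>fk. (\<forall>k. fk k absolutely_integrable_on {a..b}) \<and>
      (\<lambda>k. supnorm a b (\<lambda>x. prim a (fk k) x - F x)) \<longlonglongrightarrow> 0 \<Longrightarrow>
      (\<lambda>k. supnorm a b (\<lambda>x. prim a (RL a m (fk k)) x - G x)) \<longlonglongrightarrow> 0"
    and x: "x \<in> {a..b}"
  shows "G x = RL a m F x"
proof -
  have F: "continuous_on {a..b} F" "F a = 0" using assms(3) by (auto simp: C0_def)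
  obtain fk where fk: "\<And>k. continuous_on {a..b} (fk k)"
    and lim: "(\<lambda>k. supnorm a b (\<lambda>x. prim a (fk k) x - F x)) \<longlonglongrightarrow> 0"
    using prim_approximation_sequence[OF assms(1) F] by blast
  have fk_int: "fk k absolutely_integrable_on {a..b}" for k
    by (rule absolutely_integrable_continuous_real[OF fk])
  show ?thesis
  proof (rule supnorm_limit_unique[OF _ G continuous_on_RL[OF assms(1,2) F] _ _ x])
    show "continuous_on {a..b} (prim a (RL a m (fk k)))" for k
      by (rule continuous_on_prim[OF RL_integrable_on[OF fk_int \<open>0 < m\<close>]])
  qed (use G_tendsto fk_int lim tendsto_supnorm_prim_RL[OF assms(1,2) F(1) fk_int lim] in auto)
qed

lemma HKJ_eq:
  fixes F :: "real \<Rightarrow> real"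
  assumes "a \<le> b" "0 < m" "F \<in> C0 a b"
  shows "HKJ a b m F = (\<lambda>x. if x \<in> {a..b} then RL a m F x else 0)"
proof -
  have F: "continuous_on {a..b} F" "F a = 0" using assms(3) by (auto simp: C0_def)
  define G where "G = (\<lambda>x. if x \<in> {a..b} then RL a m F x else 0)"
  have G_continuous: "continuous_on {a..b} G"
    using continuous_on_RL[OF assms(1,2) F] by (rule continuous_on_eq) (simp add: G_def)
  have G_tendsto: "(\<lambda>k. supnorm a b (\<lambda>x. prim a (RL a m (fk k)) x - G x)) \<longlonglongrightarrow> 0"
    if "\<And>k. fk k absolutely_integrable_on {a..b}"
      and "(\<lambda>k. supnorm a b (\<lambda>x. prim a (fk k) x - F x)) \<longlonglongrightarrow> 0" for fk
  proof -
    have "supnorm a b (\<lambda>x. prim a (RL a m (fk k)) x - G x) =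
        supnorm a b (\<lambda>x. prim a (RL a m (fk k)) x - RL a m F x)" for k
      by (rule supnorm_cong) (simp add: G_def)
    then show ?thesis using tendsto_supnorm_prim_RL[OF assms(1,2) F(1) that] by simp
  qed
  have "HKJ a b m F = G"
    unfolding HKJ_def
    apply (rule the_equality)
    subgoal using G_continuous G_tendsto assms(1) by (auto simp: C0_def G_def RL_def)
    subgoal premises G' for G'
    proof (rule ext)
      show "G' x = G x" for x
        using G' eq_RL_if_prim_RL_tendsto[OF assms, of G' x]
        by (cases "x \<in> {a..b}") (auto simp: C0_def G_def)
    qed
    done
  then show ?thesis by (simp add: G_def)
qed

lemma continuous_on_eq_if_integrals_eq:
  fixes f g :: "real \<Rightarrow> real"
  assumes "a < b" "continuous_on {a..b} f" "continuous_on {a..b} g"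
    and "\<And>y. y \<in> {a..b} \<Longrightarrow> integral {a..y} f = integral {a..y} g" and x: "x \<in> {a..b}"
  shows "f x = g x"
proof -
  have "((\<lambda>u. integral {a..u} g) has_vector_derivative f x) (at x within {a..b})"
    by (intro has_vector_derivative_transform[OF x _ integral_has_vector_derivative[OF assms(2) x]])
      (simp add: assms(4))
  moreover have "((\<lambda>u. integral {a..u} g) has_vector_derivative g x) (at x within {a..b})"
    by (rule integral_has_vector_derivative[OF assms(3) x])
  ultimately show ?thesis
    using vector_derivative_unique_within_closed_interval[OF \<open>a < b\<close>] x by (simp only: box_real(2)) blast
qed

lemma RL_complement_of_Abel_solution:
  fixes \<Phi> F :: "real \<Rightarrow> real"
  assumes \<Phi>: "continuous_on {a..b} \<Phi>" and "0 < n" "n < 1"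
    and solution: "\<And>x. x \<in> {a..b} \<Longrightarrow> RL a n \<Phi> x = F x" and x: "x \<in> {a..b}"
  shows "RL a (1 - n) F x = integral {a..x} \<Phi>"
proof -
  have "\<Phi> absolutely_integrable_on {a..x}"
    using x by (intro absolutely_integrable_continuous_real continuous_on_subset[OF \<Phi>]) auto
  have "RL a (1 - n) F x = RL a (1 - n) (RL a n \<Phi>) x"
    using x solution by (intro RL_cong) auto
  also have "\<dots> = RL a 1 \<Phi> x"
    using RL_semigroup[OF \<open>\<Phi> absolutely_integrable_on {a..x}\<close>, of "1 - n" n] assms(2,3) by simp
  also have "\<dots> = integral {a..x} \<Phi>"
    using x by (simp add: RL_one)
  finally show ?thesis .
qed

lemma Abel_solution_of_RL_complement:
  fixes g F :: "real \<Rightarrow> real"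
  assumes "a < b" and F: "continuous_on {a..b} F" and g: "continuous_on {a..b} g" "g a = 0"
    and "0 < n" "n < 1"
    and complement: "\<And>x. x \<in> {a..b} \<Longrightarrow> RL a (1 - n) F x = integral {a..x} g" and x: "x \<in> {a..b}"
  shows "RL a n g x = F x"
proof (rule continuous_on_eq_if_integrals_eq[OF \<open>a < b\<close> _ F _ x])
  show "continuous_on {a..b} (RL a n g)"
    using \<open>a < b\<close> \<open>0 < n\<close> g by (intro continuous_on_RL) auto
  fix y assume y: "y \<in> {a..b}"
  have sub: "{a..y} \<subseteq> {a..b}" using y by auto
  have "integral {a..y} (RL a n g) = RL a n (prim a g) y"
    using y prim_RL_commute[OF absolutely_integrable_continuous_real[OF continuous_on_subset[OF g(1) sub]]]
      \<open>0 < n\<close> by (simp add: prim_def)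
  also have "\<dots> = RL a n (RL a (1 - n) F) y"
    using sub complement by (intro RL_cong) (auto simp: prim_def)
  also have "\<dots> = RL a 1 F y"
    using RL_semigroup[OF absolutely_integrable_continuous_real[OF continuous_on_subset[OF F sub]], of n "1 - n"]
      \<open>0 < n\<close> \<open>n < 1\<close> by simp
  also have "\<dots> = integral {a..y} F"
    using y by (simp add: RL_one)
  finally show "integral {a..y} (RL a n g) = integral {a..y} F" .
qed

theorem theorem5p1:
  fixes a b n :: real and F :: "real \<Rightarrow> real"
  assumes "a < b" and "0 < n" and "n < 1" and "F \<in> C0 a b"
  shows "(\<exists>\<Phi>\<in>C0 a b. \<forall>x\<in>{a..b}. HKJ a b n \<Phi> x = F x) \<longleftrightarrow>
         (\<exists>g. continuous_on {a..b} g \<and> g a = 0 \<and>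
              (\<forall>x\<in>{a..b}. HKJ a b (1 - n) F x = integral {a..x} g))"
proof -
  have HKJ_RL: "HKJ a b m G x = RL a m G x" if "0 < m" "G \<in> C0 a b" "x \<in> {a..b}" for m G x
    using HKJ_eq[OF less_imp_le[OF \<open>a < b\<close>] that(1,2)] that(3) by simp
  have F: "continuous_on {a..b} F" using assms(4) by (simp add: C0_def)
  show ?thesis
  proof
    assume "\<exists>\<Phi>\<in>C0 a b. \<forall>x\<in>{a..b}. HKJ a b n \<Phi> x = F x"
    then obtain \<Phi> where "\<Phi> \<in> C0 a b" "\<And>x. x \<in> {a..b} \<Longrightarrow> RL a n \<Phi> x = F x"
      using HKJ_RL[OF \<open>0 < n\<close>] by metis
    then show "\<exists>g. continuous_on {a..b} g \<and> g a = 0 \<and>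
        (\<forall>x\<in>{a..b}. HKJ a b (1 - n) F x = integral {a..x} g)"
      using RL_complement_of_Abel_solution assms HKJ_RL[of "1 - n" F] by (auto simp: C0_def)
  next
    assume "\<exists>g. continuous_on {a..b} g \<and> g a = 0 \<and>
        (\<forall>x\<in>{a..b}. HKJ a b (1 - n) F x = integral {a..x} g)"
    then obtain g where g: "continuous_on {a..b} g" "g a = 0"
      and "\<And>x. x \<in> {a..b} \<Longrightarrow> RL a (1 - n) F x = integral {a..x} g"
      using HKJ_RL[of "1 - n" F] assms by auto
    then have "\<And>x. x \<in> {a..b} \<Longrightarrow> RL a n g x = F x"
      using Abel_solution_of_RL_complement[OF \<open>a < b\<close> F g] assms(2,3) by blast
    then show "\<exists>\<Phi>\<in>C0 a b. \<forall>x\<in>{a..b}. HKJ a b n \<Phi> x = F x"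
      using g HKJ_RL[OF \<open>0 < n\<close>] by (auto simp: C0_def)
  qed
qed

end
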